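(* Let $I\subset\mathbb{K}[x_1,\ldots,x_n]$ be a zero-dimensional ideal of degree $D$ in shape position, with Gröbner basis $G_1$ w.r.t. a term ordering $<_1$, multiplication matrix $T_1$ (assumed nonsingular) and $\mathbf{e}=(1,0,\ldots,0)^t\in\mathbb{K}^D$. Let $\mathbf{w}\in\mathbb{K}^D$, and let $\tilde f_1$ be the minimal polynomial, of degree $d$, of the scalar sequence $(\langle\mathbf{w},T_1^i\mathbf{e}\rangle)_{i=0}^{2D-1}$. Let $\tilde T_1$ be the multiplication matrix of $x_1$ for the ideal $I+\langle\tilde f_1\rangle$ w.r.t. $<_1$, and let $\tilde{\mathbf{e}}=(1,0,\ldots,0)^t\in\mathbb{K}^{d}$ be the coordinate vector of $1$ in $\mathbb{K}[x_1,\ldots,x_n]/(I+\langle\tilde f_1\rangle)$. Then $\tilde f_1$ is also the minimal polynomial of the vector sequence $[\tilde{\mathbf{e}},\tilde T_1\tilde{\mathbf{e}},\tilde T_1^2\tilde{\mathbf{e}},\ldots]$.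
   Context: Variables are ordered $x_1<\cdots<x_n$. For a zero-dimensional ideal $J$ with Gröbner basis w.r.t. $<_1$, let $B=[\epsilon_1,\ldots,\epsilon_m]$ be the canonical basis (standard monomials) of the quotient ring, ordered increasingly by $<_1$, so that $\epsilon_1=1$. The multiplication matrix of $x_i$ is the $m\times m$ matrix whose $j$-th column is the coordinate vector, in $B$, of the normal form of $\epsilon_j x_i$. $I$ is in shape position if its reduced Gröbner basis w.r.t. LEX is $[f_1(x_1),x_2-f_2(x_1),\ldots,x_n-f_n(x_1)]$; then $\deg f_1=D$. The minimal polynomial of a scalar linearly recurring sequence is the monic generator of its ideal of characteristic polynomials. The minimal polynomial of a vector sequence $(A^i\mathbf{v})_{i\ge0}$ is the monic polynomial $p$ of least degree with $p(A)\mathbf{v}=0$. *)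

theory Defs
  imports "HOL-Library.Poly_Mapping" "HOL-Computational_Algebra.Polynomial"
    "Jordan_Normal_Form.Determinant"
begin

text \<open>Multivariate polynomials over a field 'k in the variables of a finite
  linearly ordered type 'v (the variables x_1 < ... < x_n; x_1 is the least one).
  Monomials are exponent vectors.\<close>

type_synonym 'v monom = "'v \<Rightarrow>\<^sub>0 nat"
type_synonym ('v, 'k) mpoly = "'v monom \<Rightarrow>\<^sub>0 'k"

definition mvar :: "'v \<Rightarrow> ('v, 'k::comm_ring_1) mpoly" where
  "mvar v = Poly_Mapping.single (Poly_Mapping.single v 1) 1"

definition mmonom :: "'v monom \<Rightarrow> ('v, 'k::comm_ring_1) mpoly" where
  "mmonom m = Poly_Mapping.single m 1"

definition x1 :: "'v::{finite,linorder}" where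
  "x1 = Min (UNIV :: 'v set)"

definition in_x1 :: "'k::comm_ring_1 poly \<Rightarrow> ('v::{finite,linorder}, 'k) mpoly" where
  "in_x1 f = (\<Sum>k\<le>degree f. Poly_Mapping.single (Poly_Mapping.single x1 k) (coeff f k))"

definition is_ideal :: "('v, 'k::comm_ring_1) mpoly set \<Rightarrow> bool" where
  "is_ideal I \<longleftrightarrow> 0 \<in> I \<and> (\<forall>a\<in>I. \<forall>b\<in>I. a + b \<in> I) \<and> (\<forall>a\<in>I. \<forall>g. g * a \<in> I)"

definition ideal_gen :: "('v, 'k::comm_ring_1) mpoly set \<Rightarrow> ('v, 'k) mpoly set" where
  "ideal_gen S = {p. \<exists>F c. finite F \<and> F \<subseteq> S \<and> p = (\<Sum>s\<in>F. c s * s)}"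

definition ideal_plus :: "('v, 'k::comm_ring_1) mpoly set \<Rightarrow> ('v, 'k) mpoly \<Rightarrow> ('v, 'k) mpoly set" where
  "ideal_plus I g = {a + h * g | a h. a \<in> I}"

definition term_order :: "('v monom \<Rightarrow> 'v monom \<Rightarrow> bool) \<Rightarrow> bool" where
  "term_order lt \<longleftrightarrow>
     (\<forall>m. \<not> lt m m) \<and>
     (\<forall>a b c. lt a b \<longrightarrow> lt b c \<longrightarrow> lt a c) \<and>
     (\<forall>a b. a \<noteq> b \<longrightarrow> lt a b \<or> lt b a) \<and>
     (\<forall>m. m \<noteq> 0 \<longrightarrow> lt 0 m) \<and>
     (\<forall>a b u. lt a b \<longrightarrow> lt (a + u) (b + u))"

definition lmon :: "('v monom \<Rightarrow> 'v monom \<Rightarrow> bool) \<Rightarrow> ('v, 'k::zero) mpoly \<Rightarrow> 'v monom" where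
  "lmon lt p = (THE m. m \<in> Poly_Mapping.keys p \<and> (\<forall>m'\<in>Poly_Mapping.keys p. m' = m \<or> lt m' m))"

definition std_monoms :: "('v monom \<Rightarrow> 'v monom \<Rightarrow> bool) \<Rightarrow> ('v, 'k::zero) mpoly set \<Rightarrow> 'v monom set" where
  "std_monoms lt I = {m. \<not> (\<exists>p\<in>I. p \<noteq> 0 \<and> lmon lt p = m)}"

definition std_basis :: "('v monom \<Rightarrow> 'v monom \<Rightarrow> bool) \<Rightarrow> ('v, 'k::zero) mpoly set \<Rightarrow> 'v monom list" where
  "std_basis lt I = (THE xs. set xs = std_monoms lt I \<and> sorted_wrt lt xs)"

definition normal_form :: "('v monom \<Rightarrow> 'v monom \<Rightarrow> bool) \<Rightarrow> ('v, 'k::comm_ring_1) mpoly set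
    \<Rightarrow> ('v, 'k) mpoly \<Rightarrow> ('v, 'k) mpoly" where
  "normal_form lt I p = (THE q. Poly_Mapping.keys q \<subseteq> std_monoms lt I \<and> p - q \<in> I)"

definition coord_vec :: "('v monom \<Rightarrow> 'v monom \<Rightarrow> bool) \<Rightarrow> ('v, 'k::comm_ring_1) mpoly set
    \<Rightarrow> ('v, 'k) mpoly \<Rightarrow> 'k vec" where
  "coord_vec lt I p = (let B = std_basis lt I; q = normal_form lt I p in
      vec (length B) (\<lambda>i. Poly_Mapping.lookup q (B ! i)))"

definition mult_matrix :: "('v monom \<Rightarrow> 'v monom \<Rightarrow> bool) \<Rightarrow> ('v, 'k::comm_ring_1) mpoly set
    \<Rightarrow> 'v \<Rightarrow> 'k mat" where
  "mult_matrix lt I v = (let B = std_basis lt I in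
      mat (length B) (length B)
        (\<lambda>(i, j). Poly_Mapping.lookup (normal_form lt I (mmonom (B ! j) * mvar v)) (B ! i)))"

definition zero_dimensional :: "('v monom \<Rightarrow> 'v monom \<Rightarrow> bool) \<Rightarrow> ('v, 'k::comm_ring_1) mpoly set \<Rightarrow> bool" where
  "zero_dimensional lt I \<longleftrightarrow> is_ideal I \<and> 1 \<notin> I \<and> finite (std_monoms lt I)"

text \<open>Shape position: the reduced LEX Groebner basis (x_1 < ... < x_n) is
  [f_1(x_1), x_2 - f_2(x_1), ..., x_n - f_n(x_1)]; written out: I is generated by
  these polynomials, f_1 is monic and the f_i (i >= 2) are reduced modulo f_1.\<close>
definition shape_position :: "('v::{finite,linorder}, 'k::field) mpoly set \<Rightarrow> bool" where
  "shape_position I \<longleftrightarrow> (\<exists>f1 (fs :: 'v \<Rightarrow> 'k poly).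
      lead_coeff f1 = 1 \<and> (\<forall>v. v \<noteq> x1 \<longrightarrow> degree (fs v) < degree f1) \<and>
      I = ideal_gen (insert (in_x1 f1) {mvar v - in_x1 (fs v) | v. v \<noteq> x1}))"

definition char_poly_seq :: "'k::field poly \<Rightarrow> (nat \<Rightarrow> 'k) \<Rightarrow> bool" where
  "char_poly_seq q s \<longleftrightarrow> (\<forall>i. (\<Sum>k\<le>degree q. coeff q k * s (i + k)) = 0)"

definition is_min_poly_seq :: "(nat \<Rightarrow> 'k::field) \<Rightarrow> 'k poly \<Rightarrow> bool" where
  "is_min_poly_seq s p \<longleftrightarrow> lead_coeff p = 1 \<and> (\<forall>q. char_poly_seq q s \<longleftrightarrow> p dvd q)"

definition poly_mat_vec :: "'k::field poly \<Rightarrow> 'k mat \<Rightarrow> 'k vec \<Rightarrow> 'k vec" where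
  "poly_mat_vec p A v = vec (dim_vec v)
      (\<lambda>i. \<Sum>k\<le>degree p. coeff p k * (((A ^\<^sub>m k) *\<^sub>v v) $ i))"

definition is_min_poly_vec :: "'k::field mat \<Rightarrow> 'k vec \<Rightarrow> 'k poly \<Rightarrow> bool" where
  "is_min_poly_vec A v p \<longleftrightarrow> lead_coeff p = 1 \<and> poly_mat_vec p A v = 0\<^sub>v (dim_vec v) \<and>
     (\<forall>q. lead_coeff q = 1 \<longrightarrow> poly_mat_vec q A v = 0\<^sub>v (dim_vec v) \<longrightarrow> degree p \<le> degree q)"

end

theory Submission
  imports Defs
begin

(*
  Write L(p) = <w, coordinates of NF_I(p)>, so that the given scalar sequence is s_i = L(x_1^i) and
  q is a characteristic polynomial of s iff L(x_1^i q(x_1)) = 0 for all i. In shape position every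
  polynomial is congruent modulo I to a polynomial in x_1 alone, so this happens iff L vanishes on
  all multiples of q(x_1). Consequently q(x_1) lies in I + <f> (f the minimal polynomial of s) iff
  f divides q. On the other hand q(T~_1) e~ is the coordinate vector of q(x_1) modulo I + <f>, which
  vanishes iff q(x_1) lies in I + <f>, i.e. iff f divides q.
*)

section \<open>Term orders\<close>

abbreviation term_order_le :: "('a \<Rightarrow> 'a \<Rightarrow> bool) \<Rightarrow> 'a \<Rightarrow> 'a \<Rightarrow> bool" where
  "term_order_le lt a b \<equiv> a = b \<or> lt a b"

lemma term_order_linorder:
  assumes "term_order lt"
  shows "class.linorder (term_order_le lt) lt"
proof
  show "lt x y = (term_order_le lt x y \<and> \<not> term_order_le lt y x)" for x y
    using assms unfolding term_order_def by blast
qed (use assms in \<open>unfold term_order_def; blast\<close>)+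

lemma term_order_irrefl: "term_order lt \<Longrightarrow> \<not> lt m m"
  unfolding term_order_def by blast

lemma term_order_trans: "term_order lt \<Longrightarrow> lt a b \<Longrightarrow> lt b c \<Longrightarrow> lt a c"
  unfolding term_order_def by blast

lemma term_order_asym: "term_order lt \<Longrightarrow> lt a b \<Longrightarrow> \<not> lt b a"
  using term_order_irrefl[of lt a] term_order_trans[of lt a b a] by blast

lemma term_order_zero_less: "term_order lt \<Longrightarrow> m \<noteq> 0 \<Longrightarrow> lt 0 m"
  unfolding term_order_def by blast

lemma term_order_add_right: "term_order lt \<Longrightarrow> lt a b \<Longrightarrow> lt (a + u) (b + u)"
  by (simp add: term_order_def)

lemma term_order_le_add:
  assumes "term_order lt"
  shows "term_order_le lt a (a + u)"
proof (cases "u = 0")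
  case False
  have "lt (0 + a) (u + a)"
    by (rule term_order_add_right[OF assms term_order_zero_less[OF assms False]])
  then show ?thesis by (simp add: add.commute)
next
  case True
  then show ?thesis by simp
qed

lemma lmon_eq_Max:
  assumes "term_order lt" "p \<noteq> 0"
  shows "lmon lt p = linorder.Max (term_order_le lt) (Poly_Mapping.keys p)"
proof -
  note lin = term_order_linorder[OF assms(1)]
  let ?M = "linorder.Max (term_order_le lt) (Poly_Mapping.keys p)"
  have M_in: "?M \<in> Poly_Mapping.keys p"
    using linorder.Max_in[OF lin finite_keys] assms(2) by simp
  have M_ge: "term_order_le lt m ?M" if "m \<in> Poly_Mapping.keys p" for m
    using linorder.Max_ge[OF lin finite_keys that] .
  show ?thesis
    unfolding lmon_def
  proof (rule the_equality)
    fix n assume n: "n \<in> Poly_Mapping.keys p \<and> (\<forall>m\<in>Poly_Mapping.keys p. m = n \<or> lt m n)"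
    then have "term_order_le lt ?M n" "term_order_le lt n ?M" using M_in M_ge by blast+
    then show "n = ?M" using term_order_asym[OF assms(1), of n ?M] by blast
  qed (use M_in M_ge in blast)
qed

lemma lmon_in_keys: "term_order lt \<Longrightarrow> p \<noteq> 0 \<Longrightarrow> lmon lt p \<in> Poly_Mapping.keys p"
  by (simp add: lmon_eq_Max linorder.Max_in[OF term_order_linorder])

lemma lmon_max:
  assumes "term_order lt" "m \<in> Poly_Mapping.keys p"
  shows "term_order_le lt m (lmon lt p)"
proof -
  have "p \<noteq> 0" using assms(2) by auto
  then show ?thesis
    using linorder.Max_ge[OF term_order_linorder[OF assms(1)] finite_keys assms(2)]
    by (simp add: lmon_eq_Max[OF assms(1)])
qed

lemma nat_seq_has_nondecreasing_subseq:
  fixes s :: "nat \<Rightarrow> nat"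
  obtains f where "strict_mono f" "\<And>n. s (f n) \<le> s (f (Suc n))"
proof -
  obtain g where g: "strict_mono g" "monoseq (\<lambda>n. s (g n))" using seq_monosub by blast
  show thesis
  proof (cases "\<forall>m n. m \<le> n \<longrightarrow> s (g m) \<le> s (g n)")
    case True
    then show ?thesis using g(1) that by simp
  next
    case False
    then have decr: "s (g n) \<le> s (g m)" if "m \<le> n" for m n
      using g(2) that unfolding monoseq_def by blast
    obtain N where N: "\<And>n. s (g N) \<le> s (g n)"
      using ex_has_least_nat[where P = "\<lambda>_. True" and m = "\<lambda>n. s (g n)"] by blast
    have const: "s (g (N + n)) = s (g N)" for n using decr[of N "N + n"] N[of "N + n"] by simp
    show ?thesis
    proof (rule that)
      show "strict_mono (\<lambda>n. g (N + n))" using g(1) unfolding strict_mono_def by simp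
      show "s (g (N + n)) \<le> s (g (N + Suc n))" for n using const[of n] const[of "Suc n"] by simp
    qed
  qed
qed

lemma dickson_subseq:
  fixes m :: "nat \<Rightarrow> ('v \<Rightarrow>\<^sub>0 nat)"
  assumes "finite V"
  obtains f where "strict_mono f"
    "\<And>v n. v \<in> V \<Longrightarrow> Poly_Mapping.lookup (m (f n)) v \<le> Poly_Mapping.lookup (m (f (Suc n))) v"
  using assms
proof (induction V arbitrary: thesis rule: finite_induct)
  case empty
  then show ?case using strict_mono_id unfolding id_def by blast
next
  case (insert x V)
  then obtain f where f: "strict_mono f"
    "\<And>v n. v \<in> V \<Longrightarrow> Poly_Mapping.lookup (m (f n)) v \<le> Poly_Mapping.lookup (m (f (Suc n))) v"
    by blast
  then have f_mono: "Poly_Mapping.lookup (m (f i)) v \<le> Poly_Mapping.lookup (m (f j)) v"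
    if "v \<in> V" "i \<le> j" for v i j
    using lift_Suc_mono_le[where f = "\<lambda>n. Poly_Mapping.lookup (m (f n)) v"] that by blast
  obtain g where g: "strict_mono g"
    "\<And>n. Poly_Mapping.lookup (m (f (g n))) x \<le> Poly_Mapping.lookup (m (f (g (Suc n)))) x"
    using nat_seq_has_nondecreasing_subseq[of "\<lambda>n. Poly_Mapping.lookup (m (f n)) x"] by blast
  have g_step: "g n \<le> g (Suc n)" for n using g(1) by (simp add: strict_mono_leD)
  show ?case
  proof (rule insert.prems)
    show "strict_mono (f \<circ> g)" using f(1) g(1) by (simp add: strict_mono_def)
    fix v n assume "v \<in> insert x V"
    then show "Poly_Mapping.lookup (m ((f \<circ> g) n)) v \<le> Poly_Mapping.lookup (m ((f \<circ> g) (Suc n))) v"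
      using g(2) f_mono[OF _ g_step] by auto
  qed
qed

text \<open>Along a subsequence on which all exponents grow, each monomial divides the next one and so
  cannot be larger in a term order (Dickson's lemma).\<close>

lemma wf_term_order:
  fixes lt :: "('v::finite) monom \<Rightarrow> 'v monom \<Rightarrow> bool"
  assumes TO: "term_order lt"
  shows "wf {(a, b). lt a b}"
  unfolding wf_iff_no_infinite_down_chain
proof
  assume "\<exists>m. \<forall>i. (m (Suc i), m i) \<in> {(a, b). lt a b}"
  then obtain m where desc: "\<And>i. lt (m (Suc i)) (m i)" by auto
  have chain: "lt (m j) (m i)" if "i < j" for i j
    using that
  proof (induction j)
    case (Suc j)
    then show ?case using desc term_order_trans[OF TO] less_Suc_eq by metis
  qed simp
  obtain f where f: "strict_mono f"
    "\<And>v n. Poly_Mapping.lookup (m (f n)) v \<le> Poly_Mapping.lookup (m (f (Suc n))) v"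
    using dickson_subseq[OF finite_UNIV, of m] by (metis UNIV_I)
  have "m (f 1) = m (f 0) + (m (f 1) - m (f 0))"
    using f(2)[where n = 0] by (intro poly_mapping_eqI) (simp add: lookup_add lookup_minus)
  then have "term_order_le lt (m (f 0)) (m (f 1))"
    using term_order_le_add[OF TO, of "m (f 0)" "m (f 1) - m (f 0)"] by simp
  moreover have "lt (m (f 1)) (m (f 0))" using chain f(1) by (simp add: strict_mono_less)
  ultimately show False using term_order_asym[OF TO] term_order_irrefl[OF TO] by auto
qed

section \<open>Ideals and normal forms\<close>

abbreviation mconst :: "'k \<Rightarrow> ('v, 'k::comm_ring_1) mpoly" where
  "mconst c \<equiv> Poly_Mapping.single 0 c"

lemma lookup_mconst_mult: "Poly_Mapping.lookup (mconst c * p) m = c * Poly_Mapping.lookup p m"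
  by (simp flip: mult_map_scale_conv_mult, transfer, simp add: when_def)

lemma keys_mconst_mult_subset: "Poly_Mapping.keys (mconst c * p) \<subseteq> Poly_Mapping.keys p"
  by (auto simp: in_keys_iff lookup_mconst_mult)

lemma mconst_mult: "mconst (a * b) = mconst a * mconst b"
  by (simp add: mult_single)

lemma mconst_mult_mmonom: "mconst c * mmonom m = Poly_Mapping.single m c"
  by (simp add: mmonom_def mult_single)

lemma mpoly_eq_sum_monoms: "p = (\<Sum>m\<in>Poly_Mapping.keys p. mconst (Poly_Mapping.lookup p m) * mmonom m)"
proof (rule poly_mapping_eqI)
  fix k
  have "(\<Sum>m\<in>Poly_Mapping.keys p. Poly_Mapping.lookup (Poly_Mapping.single m (Poly_Mapping.lookup p m)) k)
      = (\<Sum>m\<in>Poly_Mapping.keys p. if m = k then Poly_Mapping.lookup p m else 0)"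
    by (rule sum.cong) (auto simp: lookup_single when_def)
  then show "Poly_Mapping.lookup p k
      = Poly_Mapping.lookup (\<Sum>m\<in>Poly_Mapping.keys p. mconst (Poly_Mapping.lookup p m) * mmonom m) k"
    by (simp add: lookup_sum mconst_mult_mmonom in_keys_iff)
qed

lemma is_ideal_zero: "is_ideal K \<Longrightarrow> 0 \<in> K"
  unfolding is_ideal_def by blast

lemma is_ideal_add: "is_ideal K \<Longrightarrow> a \<in> K \<Longrightarrow> b \<in> K \<Longrightarrow> a + b \<in> K"
  unfolding is_ideal_def by blast

lemma is_ideal_mult_left: "is_ideal K \<Longrightarrow> a \<in> K \<Longrightarrow> g * a \<in> K"
  unfolding is_ideal_def by blast

lemma is_ideal_mult_right: "is_ideal K \<Longrightarrow> a \<in> K \<Longrightarrow> a * g \<in> K"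
  using is_ideal_mult_left[of K a g] by (simp add: mult.commute)

lemma is_ideal_diff: "is_ideal K \<Longrightarrow> a \<in> K \<Longrightarrow> b \<in> K \<Longrightarrow> a - b \<in> K"
  using is_ideal_add[of K a "(-1) * b"] is_ideal_mult_left[of K b "-1"] by simp

lemma is_ideal_sum: "is_ideal K \<Longrightarrow> (\<And>x. x \<in> F \<Longrightarrow> f x \<in> K) \<Longrightarrow> sum f F \<in> K"
  by (induction F rule: infinite_finite_induct) (auto intro: is_ideal_zero is_ideal_add)

lemma is_ideal_ideal_plus:
  fixes I :: "('v, 'k::comm_ring_1) mpoly set"
  assumes "is_ideal I"
  shows "is_ideal (ideal_plus I g)"
  unfolding is_ideal_def ideal_plus_def
proof (intro conjI ballI allI)
  have "(0 :: ('v, 'k) mpoly) = 0 + 0 * g" by simp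
  then show "0 \<in> {a + h * g |a h. a \<in> I}"
    using is_ideal_zero[OF assms] by blast
next
  fix a b assume "a \<in> {a + h * g |a h. a \<in> I}" "b \<in> {a + h * g |a h. a \<in> I}"
  then obtain a' h b' k where "a = a' + h * g" "b = b' + k * g" "a' \<in> I" "b' \<in> I" by blast
  then have "a + b = (a' + b') + (h + k) * g" "a' + b' \<in> I"
    using is_ideal_add[OF assms] by (simp_all add: algebra_simps)
  then show "a + b \<in> {a + h * g |a h. a \<in> I}" by blast
next
  fix a f assume "a \<in> {a + h * g |a h. a \<in> I}"
  then obtain a' h where "a = a' + h * g" "a' \<in> I" by blast
  then have "f * a = f * a' + (f * h) * g" "f * a' \<in> I"
    using is_ideal_mult_left[OF assms] by (simp_all add: algebra_simps)
  then show "f * a \<in> {a + h * g |a h. a \<in> I}" by blast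
qed

lemma generator_in_ideal_gen: "g \<in> S \<Longrightarrow> g \<in> ideal_gen S"
  unfolding ideal_gen_def by (intro CollectI exI[of _ "{g}"] exI[of _ "\<lambda>_. 1"]) simp

lemma subset_ideal_plus: "I \<subseteq> ideal_plus I g"
proof
  fix a assume "a \<in> I"
  moreover have "a = a + 0 * g" by simp
  ultimately show "a \<in> ideal_plus I g" unfolding ideal_plus_def by blast
qed

lemma std_monoms_antimono: "I \<subseteq> J \<Longrightarrow> std_monoms lt J \<subseteq> std_monoms lt I"
  unfolding std_monoms_def by blast

lemma std_rep_lincomb:
  fixes K :: "('v, 'k::comm_ring_1) mpoly set"
  assumes ID: "is_ideal K"
    and "finite F" "\<And>x. x \<in> F \<Longrightarrow> \<exists>q. Poly_Mapping.keys q \<subseteq> S \<and> P x - q \<in> K"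
  shows "\<exists>q. Poly_Mapping.keys q \<subseteq> S \<and> (\<Sum>x\<in>F. mconst (c x) * P x) - q \<in> K"
  using assms(2,3)
proof (induction F rule: finite_induct)
  case empty
  show ?case using is_ideal_zero[OF ID] by (intro exI[of _ 0]) simp
next
  case (insert x F)
  then obtain q1 q2 where q1: "Poly_Mapping.keys q1 \<subseteq> S" "P x - q1 \<in> K"
    and q2: "Poly_Mapping.keys q2 \<subseteq> S" "(\<Sum>y\<in>F. mconst (c y) * P y) - q2 \<in> K"
    by blast
  let ?q = "mconst (c x) * q1 + q2"
  have "(\<Sum>y\<in>insert x F. mconst (c y) * P y) - ?q
      = mconst (c x) * (P x - q1) + ((\<Sum>y\<in>F. mconst (c y) * P y) - q2)"
    using insert(1,2) by (simp add: algebra_simps)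
  also have "\<dots> \<in> K"
    using is_ideal_add[OF ID is_ideal_mult_left[OF ID q1(2)] q2(2)] .
  finally have "(\<Sum>y\<in>insert x F. mconst (c y) * P y) - ?q \<in> K" .
  moreover have "Poly_Mapping.keys ?q \<subseteq> S"
    using keys_add[of "mconst (c x) * q1" q2] keys_mconst_mult_subset[of "c x" q1] q1(1) q2(1) by blast
  ultimately show ?case by blast
qed

context
  fixes lt :: "('v::finite) monom \<Rightarrow> 'v monom \<Rightarrow> bool"
    and K :: "('v, 'k::field) mpoly set"
  assumes TO: "term_order lt" and ID: "is_ideal K"
begin

lemma std_rep_monom: "\<exists>q. Poly_Mapping.keys q \<subseteq> std_monoms lt K \<and> mmonom m - q \<in> K"
proof (induction m rule: wf_induct_rule[OF wf_term_order[OF TO]])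
  case (1 m)
  show ?case
  proof (cases "m \<in> std_monoms lt K")
    case True
    then show ?thesis using is_ideal_zero[OF ID] by (intro exI[of _ "mmonom m"]) (simp add: mmonom_def)
  next
    case False
    txt \<open>Reduce by an element of K whose leading monomial is m; only smaller monomials remain.\<close>
    then obtain g where g: "g \<in> K" "g \<noteq> 0" "lmon lt g = m" unfolding std_monoms_def by blast
    define h where "h = mconst (1 / Poly_Mapping.lookup g m) * g"
    have "m \<in> Poly_Mapping.keys g" using lmon_in_keys[OF TO g(2)] g(3) by simp
    then have h_m: "Poly_Mapping.lookup h m = 1"
      unfolding h_def by (simp add: lookup_mconst_mult in_keys_iff)
    define r where "r = mmonom m - h"
    have r_keys: "lt m' m" if "m' \<in> Poly_Mapping.keys r" for m'
    proof -
      have "m' \<noteq> m" using that h_m unfolding r_def mmonom_def by (auto simp: in_keys_iff lookup_minus)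
      moreover have "m' \<in> Poly_Mapping.keys h"
        using that \<open>m' \<noteq> m\<close> unfolding r_def mmonom_def
        by (auto simp: in_keys_iff lookup_minus lookup_single when_def)
      then have "m' \<in> Poly_Mapping.keys g" using keys_mconst_mult_subset unfolding h_def by blast
      ultimately show ?thesis using lmon_max[OF TO, of m' g] g(3) by simp
    qed
    have "\<exists>q. Poly_Mapping.keys q \<subseteq> std_monoms lt K
        \<and> (\<Sum>m'\<in>Poly_Mapping.keys r. mconst (Poly_Mapping.lookup r m') * mmonom m') - q \<in> K"
      using r_keys 1 by (intro std_rep_lincomb[OF ID]) auto
    then obtain q where q: "Poly_Mapping.keys q \<subseteq> std_monoms lt K" "r - q \<in> K"
      by (auto simp flip: mpoly_eq_sum_monoms)
    have "h \<in> K" unfolding h_def by (rule is_ideal_mult_left[OF ID g(1)])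
    then have "mmonom m - q = (r - q) + h" unfolding r_def by simp
    also have "\<dots> \<in> K" using is_ideal_add[OF ID q(2) \<open>h \<in> K\<close>] .
    finally show ?thesis using q(1) by blast
  qed
qed

lemma std_rep_exists: "\<exists>q. Poly_Mapping.keys q \<subseteq> std_monoms lt K \<and> p - q \<in> K"
  using std_rep_lincomb[OF ID, where F = "Poly_Mapping.keys p" and S = "std_monoms lt K" and P = mmonom
      and c = "Poly_Mapping.lookup p"] std_rep_monom
  by (simp flip: mpoly_eq_sum_monoms)

lemma normal_form_eqI:
  assumes "Poly_Mapping.keys q \<subseteq> std_monoms lt K" "p - q \<in> K"
  shows "normal_form lt K p = q"
  unfolding normal_form_def
proof (rule the_equality)
  fix q' assume q': "Poly_Mapping.keys q' \<subseteq> std_monoms lt K \<and> p - q' \<in> K"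
  show "q' = q"
  proof (rule ccontr)
    assume "q' \<noteq> q"
    then have nz: "q' - q \<noteq> 0" by simp
    have "q' - q = (p - q) - (p - q')" by simp
    also have "\<dots> \<in> K" using is_ideal_diff[OF ID assms(2)] q' by blast
    finally have "q' - q \<in> K" .
    moreover have "lmon lt (q' - q) \<in> std_monoms lt K"
      using lmon_in_keys[OF TO nz] keys_diff[of q' q] q' assms(1) by blast
    ultimately show False using nz unfolding std_monoms_def by blast
  qed
qed (use assms in blast)

lemma normal_form_keys: "Poly_Mapping.keys (normal_form lt K p) \<subseteq> std_monoms lt K"
  using std_rep_exists[of p] normal_form_eqI by blast

lemma normal_form_diff_mem: "p - normal_form lt K p \<in> K"
  using std_rep_exists[of p] normal_form_eqI by blast

lemma normal_form_lincomb:
  "normal_form lt K (\<Sum>x\<in>F. mconst (c x) * P x) = (\<Sum>x\<in>F. mconst (c x) * normal_form lt K (P x))"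
proof (rule normal_form_eqI)
  show "Poly_Mapping.keys (\<Sum>x\<in>F. mconst (c x) * normal_form lt K (P x)) \<subseteq> std_monoms lt K"
    using keys_sum keys_mconst_mult_subset normal_form_keys by fast
  have "(\<Sum>x\<in>F. mconst (c x) * P x) - (\<Sum>x\<in>F. mconst (c x) * normal_form lt K (P x))
      = (\<Sum>x\<in>F. mconst (c x) * (P x - normal_form lt K (P x)))"
    by (simp add: sum_subtractf right_diff_distrib)
  also have "\<dots> \<in> K"
    by (intro is_ideal_sum[OF ID] is_ideal_mult_left[OF ID] normal_form_diff_mem)
  finally show "(\<Sum>x\<in>F. mconst (c x) * P x) - (\<Sum>x\<in>F. mconst (c x) * normal_form lt K (P x)) \<in> K" .
qed

lemma normal_form_cong:
  assumes "a - b \<in> K"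
  shows "normal_form lt K a = normal_form lt K b"
proof (rule normal_form_eqI[OF normal_form_keys])
  have "a - normal_form lt K b = (a - b) + (b - normal_form lt K b)" by simp
  also have "\<dots> \<in> K" using is_ideal_add[OF ID assms normal_form_diff_mem] .
  finally show "a - normal_form lt K b \<in> K" .
qed

lemma normal_form_eq_0_iff: "normal_form lt K p = 0 \<longleftrightarrow> p \<in> K"
  using normal_form_diff_mem[of p] normal_form_eqI[of 0 p] by auto

end

section \<open>Coordinate vectors and multiplication matrices\<close>

lemma std_basis_eq:
  assumes "term_order lt" "finite (std_monoms lt K)"
  shows "std_basis lt K = linorder.sorted_list_of_set (term_order_le lt) (std_monoms lt K)"
  unfolding std_basis_def
proof (rule the_equality)
  note lin = term_order_linorder[OF assms(1)]
  let ?L = "linorder.sorted_list_of_set (term_order_le lt) (std_monoms lt K)"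
  have L: "set ?L = std_monoms lt K" "sorted_wrt lt ?L"
    using linorder.set_sorted_list_of_set[OF lin assms(2)] linorder.strict_sorted_list_of_set[OF lin]
    by blast+
  then show "set ?L = std_monoms lt K \<and> sorted_wrt lt ?L" by blast
  fix xs assume "set xs = std_monoms lt K \<and> sorted_wrt lt xs"
  then show "xs = ?L" using linorder.strict_sorted_equal[OF lin, of xs ?L] L by simp
qed

context
  fixes lt :: "('v::finite) monom \<Rightarrow> 'v monom \<Rightarrow> bool"
    and K :: "('v, 'k::zero) mpoly set"
  assumes TO: "term_order lt" and FIN: "finite (std_monoms lt K)"
begin

lemma set_std_basis: "set (std_basis lt K) = std_monoms lt K"
  by (simp add: std_basis_eq[OF TO FIN] linorder.set_sorted_list_of_set[OF term_order_linorder[OF TO] FIN])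

lemma sorted_wrt_std_basis: "sorted_wrt lt (std_basis lt K)"
  by (simp add: std_basis_eq[OF TO FIN] linorder.strict_sorted_list_of_set[OF term_order_linorder[OF TO]])

lemma distinct_std_basis: "distinct (std_basis lt K)"
  by (simp add: std_basis_eq[OF TO FIN] linorder.distinct_sorted_list_of_set[OF term_order_linorder[OF TO]])

lemma length_std_basis: "length (std_basis lt K) = card (std_monoms lt K)"
  by (simp add: std_basis_eq[OF TO FIN] linorder.length_sorted_list_of_set[OF term_order_linorder[OF TO]])

lemma sum_std_monoms_conv_std_basis:
  "(\<Sum>m\<in>std_monoms lt K. f m) = (\<Sum>i<length (std_basis lt K). f (std_basis lt K ! i))"
proof -
  have "(\<Sum>m\<in>std_monoms lt K. f m) = sum_list (map f (std_basis lt K))"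
    using sum_list_distinct_conv_sum_set[OF distinct_std_basis, of f] by (simp add: set_std_basis)
  also have "\<dots> = (\<Sum>i<length (std_basis lt K). f (std_basis lt K ! i))"
    by (simp add: sum_list_sum_nth atLeast0LessThan)
  finally show ?thesis .
qed

end

context
  fixes lt :: "('v::finite) monom \<Rightarrow> 'v monom \<Rightarrow> bool"
    and K :: "('v, 'k::field) mpoly set"
  assumes TO: "term_order lt" and ID: "is_ideal K" and FIN: "finite (std_monoms lt K)"
begin

lemma normal_form_eq_sum_std_basis:
  "normal_form lt K p = (\<Sum>i<length (std_basis lt K).
     mconst (Poly_Mapping.lookup (normal_form lt K p) (std_basis lt K ! i)) * mmonom (std_basis lt K ! i))"
proof -
  let ?q = "normal_form lt K p"
  have "?q = (\<Sum>m\<in>Poly_Mapping.keys ?q. mconst (Poly_Mapping.lookup ?q m) * mmonom m)"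
    by (rule mpoly_eq_sum_monoms)
  also have "\<dots> = (\<Sum>m\<in>std_monoms lt K. mconst (Poly_Mapping.lookup ?q m) * mmonom m)"
    using FIN normal_form_keys[OF TO ID, of p] by (intro sum.mono_neutral_left) (auto simp: in_keys_iff)
  finally show ?thesis by (simp only: sum_std_monoms_conv_std_basis[OF TO FIN])
qed

lemma dim_coord_vec: "dim_vec (coord_vec lt K p) = length (std_basis lt K)"
  unfolding coord_vec_def by (simp add: Let_def)

lemma coord_vec_carrier: "coord_vec lt K p \<in> carrier_vec (length (std_basis lt K))"
  by (rule carrier_vecI[OF dim_coord_vec])

lemma coord_vec_nth:
  "i < length (std_basis lt K) \<Longrightarrow>
    coord_vec lt K p $ i = Poly_Mapping.lookup (normal_form lt K p) (std_basis lt K ! i)"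
  unfolding coord_vec_def by (simp add: Let_def)

lemma coord_vec_cong: "a - b \<in> K \<Longrightarrow> coord_vec lt K a = coord_vec lt K b"
  unfolding coord_vec_def by (drule normal_form_cong[OF TO ID]) simp

lemma coord_vec_lincomb_nth:
  "i < length (std_basis lt K) \<Longrightarrow>
    coord_vec lt K (\<Sum>x\<in>F. mconst (c x) * P x) $ i = (\<Sum>x\<in>F. c x * coord_vec lt K (P x) $ i)"
  by (simp add: coord_vec_nth normal_form_lincomb[OF TO ID] lookup_sum lookup_mconst_mult)

lemma scalar_prod_coord_vec_lincomb:
  "w \<bullet> coord_vec lt K (\<Sum>x\<in>F. mconst (c x) * P x) = (\<Sum>x\<in>F. c x * (w \<bullet> coord_vec lt K (P x)))"
proof -
  let ?n = "length (std_basis lt K)"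
  have "w \<bullet> coord_vec lt K (\<Sum>x\<in>F. mconst (c x) * P x)
      = (\<Sum>i<?n. w $ i * (\<Sum>x\<in>F. c x * coord_vec lt K (P x) $ i))"
    by (simp add: scalar_prod_def dim_coord_vec coord_vec_lincomb_nth atLeast0LessThan)
  also have "\<dots> = (\<Sum>x\<in>F. c x * (\<Sum>i<?n. w $ i * coord_vec lt K (P x) $ i))"
    by (simp add: sum_distrib_left mult.left_commute sum.swap[of _ F])
  also have "\<dots> = (\<Sum>x\<in>F. c x * (w \<bullet> coord_vec lt K (P x)))"
    by (simp add: scalar_prod_def dim_coord_vec atLeast0LessThan)
  finally show ?thesis .
qed

lemma coord_vec_eq_0_iff: "coord_vec lt K p = 0\<^sub>v (length (std_basis lt K)) \<longleftrightarrow> p \<in> K"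
proof -
  have "coord_vec lt K p = 0\<^sub>v (length (std_basis lt K))
      \<longleftrightarrow> (\<forall>m\<in>set (std_basis lt K). Poly_Mapping.lookup (normal_form lt K p) m = 0)"
    by (auto simp: vec_eq_iff dim_coord_vec coord_vec_nth all_set_conv_all_nth)
  also have "\<dots> \<longleftrightarrow> Poly_Mapping.keys (normal_form lt K p) = {}"
    using normal_form_keys[OF TO ID, of p]
    by (auto simp: set_std_basis[OF TO FIN] in_keys_iff simp del: keys_eq_empty)
  also have "\<dots> \<longleftrightarrow> normal_form lt K p = 0" by simp
  also have "\<dots> \<longleftrightarrow> p \<in> K" by (rule normal_form_eq_0_iff[OF TO ID])
  finally show ?thesis .
qed

lemma mult_matrix_carrier:
  "mult_matrix lt K v \<in> carrier_mat (length (std_basis lt K)) (length (std_basis lt K))"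
  unfolding mult_matrix_def by (simp add: Let_def)

lemma mult_matrix_mult_coord_vec: "mult_matrix lt K v *\<^sub>v coord_vec lt K p = coord_vec lt K (p * mvar v)"
proof (rule eq_vecI)
  let ?B = "std_basis lt K" and ?n = "length (std_basis lt K)"
  let ?c = "\<lambda>j. Poly_Mapping.lookup (normal_form lt K p) (?B ! j)"
  fix i assume "i < dim_vec (coord_vec lt K (p * mvar v))"
  then have i: "i < ?n" by (simp add: dim_coord_vec)
  have "(mult_matrix lt K v *\<^sub>v coord_vec lt K p) $ i
      = (\<Sum>j<?n. ?c j * coord_vec lt K (mmonom (?B ! j) * mvar v) $ i)"
    using i unfolding mult_matrix_def
    by (simp add: Let_def scalar_prod_def dim_coord_vec coord_vec_nth atLeast0LessThan mult.commute)
  also have "\<dots> = coord_vec lt K (\<Sum>j<?n. mconst (?c j) * (mmonom (?B ! j) * mvar v)) $ i"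
    by (rule coord_vec_lincomb_nth[OF i, symmetric])
  also have "(\<Sum>j<?n. mconst (?c j) * (mmonom (?B ! j) * mvar v)) = normal_form lt K p * mvar v"
    by (subst normal_form_eq_sum_std_basis) (simp add: sum_distrib_right mult.assoc)
  also have "coord_vec lt K (normal_form lt K p * mvar v) = coord_vec lt K (p * mvar v)"
  proof (rule coord_vec_cong)
    have "normal_form lt K p * mvar v - p * mvar v = (p - normal_form lt K p) * (- mvar v)"
      by (simp add: algebra_simps)
    then show "normal_form lt K p * mvar v - p * mvar v \<in> K"
      using is_ideal_mult_right[OF ID normal_form_diff_mem[OF TO ID]] by (simp only:)
  qed
  finally show "(mult_matrix lt K v *\<^sub>v coord_vec lt K p) $ i = coord_vec lt K (p * mvar v) $ i" .
qed (simp add: dim_coord_vec mult_matrix_def Let_def)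

lemma mult_matrix_pow_mult_coord_vec:
  "(mult_matrix lt K v ^\<^sub>m k) *\<^sub>v coord_vec lt K p = coord_vec lt K (p * mvar v ^ k)"
proof (induction k arbitrary: p)
  case 0
  show ?case using coord_vec_carrier[of p] by (simp add: mult_matrix_def Let_def)
next
  case (Suc k)
  have "(mult_matrix lt K v ^\<^sub>m Suc k) *\<^sub>v coord_vec lt K p
      = (mult_matrix lt K v ^\<^sub>m k) *\<^sub>v (mult_matrix lt K v *\<^sub>v coord_vec lt K p)"
    unfolding pow_mat.simps
    by (rule assoc_mult_mat_vec[OF pow_carrier_mat[OF mult_matrix_carrier] mult_matrix_carrier coord_vec_carrier])
  then show ?case by (simp add: mult_matrix_mult_coord_vec Suc mult.assoc)
qed

end

context
  fixes lt :: "('v::finite) monom \<Rightarrow> 'v monom \<Rightarrow> bool"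
    and K :: "('v, 'k::field) mpoly set"
  assumes TO: "term_order lt" and ID: "is_ideal K" and FIN: "finite (std_monoms lt K)"
    and proper: "1 \<notin> K"
begin

lemma zero_in_std_monoms: "0 \<in> std_monoms lt K"
proof (rule ccontr)
  assume "0 \<notin> std_monoms lt K"
  then obtain p where p: "p \<in> K" "p \<noteq> 0" "lmon lt p = 0" unfolding std_monoms_def by blast
  have "Poly_Mapping.keys p \<subseteq> {0}"
  proof
    fix m assume "m \<in> Poly_Mapping.keys p"
    then have "term_order_le lt m 0" using lmon_max[OF TO] p(3) by metis
    then show "m \<in> {0}" using term_order_zero_less[OF TO, of m] term_order_asym[OF TO] by auto
  qed
  then have "Poly_Mapping.keys p = {0}" using p(2) by (metis keys_eq_empty subset_singleton_iff)
  then have "p = mconst (Poly_Mapping.lookup p 0)" and "Poly_Mapping.lookup p 0 \<noteq> 0"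
    using mpoly_eq_sum_monoms[of p] by (auto simp: mmonom_def in_keys_iff)
  then have "mconst (1 / Poly_Mapping.lookup p 0) * p = 1"
    by (metis mult_single nonzero_divide_eq_eq single_one add_0)
  then show False using is_ideal_mult_left[OF ID p(1)] proper by metis
qed

lemma std_basis_nth_0: "0 < length (std_basis lt K) \<and> std_basis lt K ! 0 = 0"
proof -
  obtain j where j: "j < length (std_basis lt K)" "std_basis lt K ! j = 0"
    using zero_in_std_monoms set_std_basis[OF TO FIN] by (metis in_set_conv_nth)
  moreover have "j = 0"
  proof (rule ccontr)
    assume "j \<noteq> 0"
    then have "lt (std_basis lt K ! 0) 0"
      using sorted_wrt_nth_less[OF sorted_wrt_std_basis[OF TO FIN] _ j(1)] j(2) by simp
    moreover have "std_basis lt K ! 0 \<noteq> 0"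
      using nth_eq_iff_index_eq[OF distinct_std_basis[OF TO FIN] _ j(1), of 0] j \<open>j \<noteq> 0\<close> by force
    ultimately show False using term_order_zero_less[OF TO] term_order_asym[OF TO] by blast
  qed
  ultimately show ?thesis by simp
qed

lemma coord_vec_one: "coord_vec lt K 1 = unit_vec (length (std_basis lt K)) 0"
proof (rule eq_vecI)
  let ?B = "std_basis lt K"
  have nf_one: "normal_form lt K 1 = 1"
    using zero_in_std_monoms is_ideal_zero[OF ID] by (intro normal_form_eqI[OF TO ID]) auto
  fix i assume "i < dim_vec (unit_vec (length ?B) 0)"
  then have i: "i < length ?B" by simp
  have "?B ! i = 0 \<longleftrightarrow> i = 0"
    using nth_eq_iff_index_eq[OF distinct_std_basis[OF TO FIN] i, of 0] std_basis_nth_0 by simp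
  then show "coord_vec lt K 1 $ i = unit_vec (length ?B) 0 $ i"
    using i std_basis_nth_0 by (simp add: coord_vec_nth[OF TO ID FIN] nf_one lookup_one when_def)
qed (simp add: dim_coord_vec[OF TO ID FIN])

end

section \<open>Polynomials in the least variable and shape position\<close>

abbreviation X1 :: "('v::{finite,linorder}, 'k::comm_ring_1) mpoly" where
  "X1 \<equiv> mvar x1"

lemma mvar_pow: "(mvar v :: ('v, 'k::comm_ring_1) mpoly) ^ k = Poly_Mapping.single (Poly_Mapping.single v k) 1"
proof (induction k)
  case (Suc k)
  have "Poly_Mapping.single v (Suc k) = Poly_Mapping.single v 1 + Poly_Mapping.single v k"
    by (simp flip: single_add)
  then show ?case using Suc by (simp add: mvar_def mult_single)
qed simp

lemma in_x1_eq_sum: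
  assumes "degree f \<le> N"
  shows "(in_x1 f :: ('v::{finite,linorder}, 'k::comm_ring_1) mpoly) = (\<Sum>k\<le>N. mconst (coeff f k) * X1 ^ k)"
proof -
  have "(in_x1 f :: ('v, 'k) mpoly) = (\<Sum>k\<le>degree f. mconst (coeff f k) * X1 ^ k)"
    unfolding in_x1_def by (simp add: mvar_pow mult_single)
  also have "\<dots> = (\<Sum>k\<le>N. mconst (coeff f k) * X1 ^ k)"
    using assms by (intro sum.mono_neutral_left) (auto simp: coeff_eq_0)
  finally show ?thesis .
qed

lemma in_x1_add: "(in_x1 (f + g) :: ('v::{finite,linorder}, 'k::comm_ring_1) mpoly) = in_x1 f + in_x1 g"
proof -
  let ?N = "max (degree f) (degree g)"
  have "degree (f + g) \<le> ?N" by (rule degree_add_le) auto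
  then show ?thesis
    by (simp add: in_x1_eq_sum[of _ ?N] sum.distrib single_add distrib_right)
qed

lemma in_x1_smult: "(in_x1 (smult a f) :: ('v::{finite,linorder}, 'k::comm_ring_1) mpoly) = mconst a * in_x1 f"
proof -
  have "(in_x1 (smult a f) :: ('v, 'k) mpoly) = (\<Sum>k\<le>degree f. mconst (coeff (smult a f) k) * X1 ^ k)"
    by (rule in_x1_eq_sum[OF degree_smult_le])
  also have "\<dots> = mconst a * (\<Sum>k\<le>degree f. mconst (coeff f k) * X1 ^ k)"
    by (simp add: sum_distrib_left mconst_mult mult.assoc)
  finally show ?thesis by (simp only: in_x1_eq_sum[OF order_refl])
qed

lemma in_x1_pCons_0: "(in_x1 (pCons 0 f) :: ('v::{finite,linorder}, 'k::comm_ring_1) mpoly) = X1 * in_x1 f"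
proof -
  have "(in_x1 (pCons 0 f) :: ('v, 'k) mpoly) = (\<Sum>k\<le>Suc (degree f). mconst (coeff (pCons 0 f) k) * X1 ^ k)"
    by (rule in_x1_eq_sum[OF degree_pCons_le])
  also have "\<dots> = X1 * (\<Sum>k\<le>degree f. mconst (coeff f k) * X1 ^ k)"
    by (subst sum.atMost_Suc_shift) (simp add: sum_distrib_left mult.left_commute)
  finally show ?thesis by (simp only: in_x1_eq_sum[OF order_refl])
qed

lemma in_x1_const: "(in_x1 [:c:] :: ('v::{finite,linorder}, 'k::comm_ring_1) mpoly) = mconst c"
  using in_x1_eq_sum[of "[:c:]" 0] by simp

lemma in_x1_mult: "(in_x1 (f * g) :: ('v::{finite,linorder}, 'k::comm_ring_1) mpoly) = in_x1 f * in_x1 g"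
proof (induction f)
  case 0
  show ?case by (simp add: in_x1_def)
next
  case (pCons a f)
  have "pCons a f = [:a:] + pCons 0 f" by simp
  then show ?case
    by (simp add: in_x1_add in_x1_smult in_x1_pCons_0 in_x1_const pCons.IH algebra_simps
        del: add_pCons pCons_0_0)
qed

lemma mmonom_eq_prod_mvar_pow:
  "(mmonom m :: ('v::finite, 'k::comm_ring_1) mpoly) = (\<Prod>v\<in>UNIV. mvar v ^ Poly_Mapping.lookup m v)"
proof -
  have "(\<Prod>v\<in>V. mvar v ^ Poly_Mapping.lookup m v)
      = (Poly_Mapping.single (\<Sum>v\<in>V. Poly_Mapping.single v (Poly_Mapping.lookup m v)) 1
          :: ('v, 'k) mpoly)" if "finite V" for V
    using that by (induction V rule: finite_induct) (simp_all add: mvar_pow mult_single)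
  moreover have "(\<Sum>v\<in>UNIV. Poly_Mapping.single v (Poly_Mapping.lookup m v)) = m"
    by (rule poly_mapping_eqI) (simp add: lookup_sum lookup_single when_def)
  ultimately show ?thesis by (simp add: mmonom_def)
qed

lemma mpoly_mem_closed_subring:
  fixes S :: "('v::finite, 'k::comm_ring_1) mpoly set"
  assumes const: "\<And>c. mconst c \<in> S" and var: "\<And>v. mvar v \<in> S"
    and add: "\<And>a b. a \<in> S \<Longrightarrow> b \<in> S \<Longrightarrow> a + b \<in> S"
    and mult: "\<And>a b. a \<in> S \<Longrightarrow> b \<in> S \<Longrightarrow> a * b \<in> S"
  shows "p \<in> S"
proof -
  have sum: "sum f F \<in> S" if "\<And>x. x \<in> F \<Longrightarrow> f x \<in> S" for f :: "'a \<Rightarrow> _" and F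
    using that const[of 0] add by (induction F rule: infinite_finite_induct) auto
  have prod: "prod f F \<in> S" if "\<And>x. x \<in> F \<Longrightarrow> f x \<in> S" for f :: "'a \<Rightarrow> _" and F
    using that const[of 1] mult by (induction F rule: infinite_finite_induct) auto
  have pow: "a ^ k \<in> S" if "a \<in> S" for a k
    using that const[of 1] mult by (induction k) auto
  have "mmonom m \<in> S" for m
    unfolding mmonom_eq_prod_mvar_pow by (intro prod pow var)
  then show ?thesis
    by (subst mpoly_eq_sum_monoms) (intro sum mult const)
qed

lemma shape_position_univariate_rep:
  fixes I :: "('v::{finite,linorder}, 'k::field) mpoly set"
  assumes SP: "shape_position I" and ID: "is_ideal I"
  shows "\<exists>r. h - in_x1 r \<in> I"
proof (rule mpoly_mem_closed_subring[of "{h. \<exists>r. h - in_x1 r \<in> I}", simplified])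
  show "\<exists>r. mconst c - in_x1 r \<in> I" for c
    using is_ideal_zero[OF ID] in_x1_const[of c] by (metis diff_self)
  show "\<exists>r. mvar v - in_x1 r \<in> I" for v
  proof (cases "v = x1")
    case True
    have "in_x1 (pCons 0 [:1:]) = X1" by (simp add: in_x1_pCons_0 in_x1_const)
    then show ?thesis using True is_ideal_zero[OF ID] by (metis diff_self)
  next
    case False
    obtain f1 fs where "I = ideal_gen (insert (in_x1 f1) {mvar v - in_x1 (fs v) | v. v \<noteq> x1})"
      using SP unfolding shape_position_def by blast
    then have "mvar v - in_x1 (fs v) \<in> I"
      using False by (auto intro: generator_in_ideal_gen)
    then show ?thesis by blast
  qed
  fix a b assume "\<exists>r. a - in_x1 r \<in> I" "\<exists>r. b - in_x1 r \<in> I"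
  then obtain ra rb where ra: "a - in_x1 ra \<in> I" and rb: "b - in_x1 rb \<in> I" by blast
  have "a + b - in_x1 (ra + rb) = (a - in_x1 ra) + (b - in_x1 rb)" by (simp add: in_x1_add)
  then show "\<exists>r. a + b - in_x1 r \<in> I" using is_ideal_add[OF ID ra rb] by metis
  have "a * b - in_x1 (ra * rb) = (a - in_x1 ra) * b + in_x1 ra * (b - in_x1 rb)"
    by (simp add: in_x1_mult algebra_simps)
  then show "\<exists>r. a * b - in_x1 r \<in> I"
    using is_ideal_add[OF ID is_ideal_mult_right[OF ID ra] is_ideal_mult_left[OF ID rb]] by metis
qed

section \<open>The scalar sequence and the minimal polynomial\<close>

lemma scalar_prod_coord_vec_x1_pow_mult:
  fixes lt :: "('v::{finite,linorder}) monom \<Rightarrow> 'v monom \<Rightarrow> bool"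
    and I :: "('v, 'k::field) mpoly set"
  assumes TO: "term_order lt" and ID: "is_ideal I" and FIN: "finite (std_monoms lt I)"
  shows "w \<bullet> coord_vec lt I (X1 ^ i * in_x1 q)
    = (\<Sum>k\<le>degree q. coeff q k * (w \<bullet> coord_vec lt I (X1 ^ (i + k))))"
proof -
  have "(X1 ^ i * in_x1 q :: ('v, 'k) mpoly) = (\<Sum>k\<le>degree q. mconst (coeff q k) * X1 ^ (i + k))"
    by (simp add: in_x1_eq_sum[OF order_refl] sum_distrib_left power_add mult.left_commute)
  then show ?thesis by (simp add: scalar_prod_coord_vec_lincomb[OF TO ID FIN])
qed

context
  fixes lt :: "('v::{finite,linorder}) monom \<Rightarrow> 'v monom \<Rightarrow> bool"
    and I :: "('v, 'k::field) mpoly set"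
    and w :: "'k vec"
  assumes TO: "term_order lt" and ID: "is_ideal I" and FIN: "finite (std_monoms lt I)"
    and SP: "shape_position I"
begin

lemma char_poly_seq_iff_annihilates:
  "char_poly_seq q (\<lambda>i. w \<bullet> coord_vec lt I (X1 ^ i))
    \<longleftrightarrow> (\<forall>h. w \<bullet> coord_vec lt I (h * in_x1 q) = 0)"
proof
  assume char: "char_poly_seq q (\<lambda>i. w \<bullet> coord_vec lt I (X1 ^ i))"
  show "\<forall>h. w \<bullet> coord_vec lt I (h * in_x1 q) = 0"
  proof
    fix h
    obtain r where r: "h - in_x1 r \<in> I" using shape_position_univariate_rep[OF SP ID] by blast
    have "(h - in_x1 r) * in_x1 q \<in> I" by (rule is_ideal_mult_right[OF ID r])
    then have "coord_vec lt I (h * in_x1 q) = coord_vec lt I (in_x1 r * in_x1 q)"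
      by (intro coord_vec_cong[OF TO ID FIN]) (simp add: algebra_simps)
    also have "in_x1 r * in_x1 q = (\<Sum>j\<le>degree r. mconst (coeff r j) * (X1 ^ j * in_x1 q))"
      by (simp add: in_x1_eq_sum[OF order_refl, of r] sum_distrib_right mult.assoc)
    finally show "w \<bullet> coord_vec lt I (h * in_x1 q) = 0"
      using char by (simp add: scalar_prod_coord_vec_lincomb[OF TO ID FIN]
          scalar_prod_coord_vec_x1_pow_mult[OF TO ID FIN] char_poly_seq_def)
  qed
next
  assume "\<forall>h. w \<bullet> coord_vec lt I (h * in_x1 q) = 0"
  then show "char_poly_seq q (\<lambda>i. w \<bullet> coord_vec lt I (X1 ^ i))"
    by (simp add: char_poly_seq_def flip: scalar_prod_coord_vec_x1_pow_mult[OF TO ID FIN])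
qed

lemma char_poly_seq_if_mem_ideal_plus:
  assumes char: "char_poly_seq f (\<lambda>i. w \<bullet> coord_vec lt I (X1 ^ i))"
    and mem: "in_x1 q \<in> ideal_plus I (in_x1 f)"
  shows "char_poly_seq q (\<lambda>i. w \<bullet> coord_vec lt I (X1 ^ i))"
  unfolding char_poly_seq_iff_annihilates
proof
  fix h
  obtain a g where a: "in_x1 q = a + g * in_x1 f" "a \<in> I"
    using mem unfolding ideal_plus_def by blast
  have "h * in_x1 q - (h * g) * in_x1 f = h * a" using a(1) by (simp add: algebra_simps)
  then have "coord_vec lt I (h * in_x1 q) = coord_vec lt I ((h * g) * in_x1 f)"
    using is_ideal_mult_left[OF ID a(2)] by (intro coord_vec_cong[OF TO ID FIN]) simp
  then show "w \<bullet> coord_vec lt I (h * in_x1 q) = 0"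
    using char unfolding char_poly_seq_iff_annihilates by simp
qed

lemma in_x1_mem_ideal_plus_iff_dvd:
  assumes "is_min_poly_seq (\<lambda>i. w \<bullet> coord_vec lt I (X1 ^ i)) f"
  shows "in_x1 q \<in> ideal_plus I (in_x1 f) \<longleftrightarrow> f dvd q"
proof
  assume "in_x1 q \<in> ideal_plus I (in_x1 f)"
  moreover have "char_poly_seq f (\<lambda>i. w \<bullet> coord_vec lt I (X1 ^ i))"
    using assms unfolding is_min_poly_seq_def by simp
  ultimately show "f dvd q"
    using assms char_poly_seq_if_mem_ideal_plus unfolding is_min_poly_seq_def by blast
next
  assume "f dvd q"
  then obtain r where "q = f * r" by (elim dvdE)
  then have "in_x1 q = 0 + in_x1 r * in_x1 f" by (simp add: in_x1_mult mult.commute)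
  then show "in_x1 q \<in> ideal_plus I (in_x1 f)"
    using is_ideal_zero[OF ID] unfolding ideal_plus_def by blast
qed

end

lemma poly_mat_vec_mult_matrix_x1:
  fixes lt :: "('v::{finite,linorder}) monom \<Rightarrow> 'v monom \<Rightarrow> bool"
    and K :: "('v, 'k::field) mpoly set"
  assumes TO: "term_order lt" and ID: "is_ideal K" and FIN: "finite (std_monoms lt K)"
  shows "poly_mat_vec q (mult_matrix lt K x1) (coord_vec lt K 1) = coord_vec lt K (in_x1 q)"
proof (rule eq_vecI)
  fix i assume "i < dim_vec (coord_vec lt K (in_x1 q))"
  then have i: "i < length (std_basis lt K)" by (simp add: dim_coord_vec[OF TO ID FIN])
  have "poly_mat_vec q (mult_matrix lt K x1) (coord_vec lt K 1) $ i
      = (\<Sum>k\<le>degree q. coeff q k * coord_vec lt K (X1 ^ k) $ i)"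
    using i by (simp add: poly_mat_vec_def dim_coord_vec[OF TO ID FIN]
        mult_matrix_pow_mult_coord_vec[OF TO ID FIN])
  also have "\<dots> = coord_vec lt K (\<Sum>k\<le>degree q. mconst (coeff q k) * X1 ^ k) $ i"
    by (rule coord_vec_lincomb_nth[OF TO ID FIN i, symmetric])
  finally show "poly_mat_vec q (mult_matrix lt K x1) (coord_vec lt K 1) $ i = coord_vec lt K (in_x1 q) $ i"
    by (simp only: in_x1_eq_sum[OF order_refl])
qed (simp add: poly_mat_vec_def dim_coord_vec[OF TO ID FIN])

lemma is_min_poly_vecI:
  assumes "lead_coeff p = 1" "\<And>q. poly_mat_vec q A v = 0\<^sub>v (dim_vec v) \<longleftrightarrow> p dvd q"
  shows "is_min_poly_vec A v p"
  unfolding is_min_poly_vec_def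
proof (intro conjI allI impI)
  fix q assume "lead_coeff q = 1" "poly_mat_vec q A v = 0\<^sub>v (dim_vec v)"
  then show "degree p \<le> degree q" using assms(2) by (auto intro: dvd_imp_degree_le)
qed (use assms in auto)

theorem lemma3p5:
  fixes lt :: "('v::{finite,linorder}) monom \<Rightarrow> 'v monom \<Rightarrow> bool"
    and I :: "('v, 'k::field) mpoly set"
    and D d :: nat
    and w :: "'k vec"
    and f1t :: "'k poly"
  assumes "term_order lt"
    and "zero_dimensional lt I"
    and "D = card (std_monoms lt I)"
    and "shape_position I"
    and "det (mult_matrix lt I x1) \<noteq> 0"
    and "w \<in> carrier_vec D"
    and "is_min_poly_seq
           (\<lambda>i. w \<bullet> ((mult_matrix lt I x1 ^\<^sub>m i) *\<^sub>v unit_vec D 0)) f1t"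
    and "degree f1t = d"
  shows "is_min_poly_vec (mult_matrix lt (ideal_plus I (in_x1 f1t)) x1)
           (coord_vec lt (ideal_plus I (in_x1 f1t)) 1) f1t"
proof -
  let ?J = "ideal_plus I (in_x1 f1t)"
  have ID: "is_ideal I" and proper: "1 \<notin> I" and FIN: "finite (std_monoms lt I)"
    using assms(2) unfolding zero_dimensional_def by auto
  have IDJ: "is_ideal ?J" using is_ideal_ideal_plus[OF ID] .
  have FINJ: "finite (std_monoms lt ?J)"
    using finite_subset[OF std_monoms_antimono[OF subset_ideal_plus] FIN] .
  have "unit_vec D 0 = coord_vec lt I 1"
    using coord_vec_one[OF assms(1) ID FIN proper] assms(3) length_std_basis[OF assms(1) FIN] by simp
  then have minpoly: "is_min_poly_seq (\<lambda>i. w \<bullet> coord_vec lt I (X1 ^ i)) f1t"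
    using assms(7) by (simp add: mult_matrix_pow_mult_coord_vec[OF assms(1) ID FIN])
  show ?thesis
  proof (rule is_min_poly_vecI)
    show "lead_coeff f1t = 1" using minpoly unfolding is_min_poly_seq_def by simp
    fix q
    show "poly_mat_vec q (mult_matrix lt ?J x1) (coord_vec lt ?J 1)
        = 0\<^sub>v (dim_vec (coord_vec lt ?J 1)) \<longleftrightarrow> f1t dvd q"
      by (simp add: poly_mat_vec_mult_matrix_x1[OF assms(1) IDJ FINJ] dim_coord_vec[OF assms(1) IDJ FINJ]
          coord_vec_eq_0_iff[OF assms(1) IDJ FINJ]
          in_x1_mem_ideal_plus_iff_dvd[OF assms(1) ID FIN assms(4) minpoly])
  qed
qed

end
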